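(* Let $A\in\mathbb{R}^{m\times n}$ with $m>n$ be a full-rank standardized matrix with no two distinct rows parallel, let $x\in\mathbb{R}^n$, and let $b=Ax$. Let $x_{k-1}$ be the $(k-1)$-st iterate of the two-subspace Kaczmarz method, and let $x_k$ be the next iterate. Then, conditionally on $x_{k-1}$, $$\mathbb{E}\|x-x_k\|_2^2\le\left(\left(1-\frac1R\right)^2-\frac DR\right)\|x-x_{k-1}\|_2^2,$$ where $D=\min\left\{\frac{\delta^2(1-\delta)}{1+\delta},\frac{\Delta^2(1-\Delta)}{1+\Delta}\right\}$.
   Context: $A\in\mathbb{R}^{m\times n}$ has rows $a_1,\dots,a_m$. It is called standardized if $\|a_i\|_2=1$ for all $i$. "No two distinct rows parallel" means $|\langle a_r,a_s\rangle|<1$ for all $r\ne s$. Two-subspace Kaczmarz method for $(A,b)$, $b\in\mathbb{R}^m$: start from $x_0\in\mathbb{R}^n$. For $k=1,2,\dots$, choose an ordered pair $(r,s)$ of distinct indices in $\{1,\dots,m\}$ uniformly at random among the $m^2-m$ such pairs, independently of all previous choices. Then set $\mu_k=\langle a_r,a_s\rangle$, $y_k=x_{k-1}+(b_s-\langle x_{k-1},a_s\rangle)a_s$, $v_k=\frac{a_r-\mu_k a_s}{\sqrt{1-\mu_k^2}}$, $\beta_k=\frac{b_r-b_s\mu_k}{\sqrt{1-\mu_k^2}}$, and $x_k=y_k+(\beta_k-\langle y_k,v_k\rangle)v_k$. Coherence parameters: $\Delta=\max_{j\ne k}|\langle a_j,a_k\rangle|$ and $\delta=\min_{j\ne k}|\langle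 a_j,a_k\rangle|$. Scaled condition number: $R=\|A\|_F^2\|A^{-1}\|^2$, where $\|A^{-1}\|=\inf\{M: M\|Az\|_2\ge\|z\|_2\ \text{for all } z\}$, i.e. the reciprocal of the smallest singular value of $A$. *)

theory Defs
  imports "HOL-Analysis.Analysis"
begin

text \<open>Rows of A are A $ i. One step of the two-subspace Kaczmarz method with
  the ordered pair (r,s) of row indices, starting from the previous iterate xp.\<close>
definition tsk_step :: "real^'n^'m \<Rightarrow> real^'m \<Rightarrow> 'm \<Rightarrow> 'm \<Rightarrow> real^'n \<Rightarrow> real^'n" where
  "tsk_step A b r s xp =
    (let mu = (A $ r) \<bullet> (A $ s);
         y = xp + (b $ s - xp \<bullet> (A $ s)) *\<^sub>R (A $ s);
         v = (1 / sqrt (1 - mu\<^sup>2)) *\<^sub>R (A $ r - mu *\<^sub>R (A $ s));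
         beta = (b $ r - b $ s * mu) / sqrt (1 - mu\<^sup>2)
     in y + (beta - y \<bullet> v) *\<^sub>R v)"

text \<open>Conditional expectation of f(x_k) given x_{k-1} = xp: uniform average over
  the m^2 - m ordered pairs of distinct indices.\<close>
definition tsk_expect :: "real^'n^'m \<Rightarrow> real^'m \<Rightarrow> real^'n \<Rightarrow> (real^'n \<Rightarrow> real) \<Rightarrow> real" where
  "tsk_expect A b xp f =
    (\<Sum>p\<in>{(r,s). r \<noteq> s}. f (tsk_step A b (fst p) (snd p) xp))
      / (real CARD('m)^2 - real CARD('m))"

definition standardized :: "real^'n^'m \<Rightarrow> bool" where
  "standardized A \<longleftrightarrow> (\<forall>i. norm (A $ i) = 1)"

definition no_parallel_rows :: "real^'n^'m \<Rightarrow> bool" where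
  "no_parallel_rows A \<longleftrightarrow> (\<forall>r s. r \<noteq> s \<longrightarrow> \<bar>(A $ r) \<bullet> (A $ s)\<bar> < 1)"

definition coh_max :: "real^'n^'m \<Rightarrow> real" where
  "coh_max A = Max {\<bar>(A $ j) \<bullet> (A $ k)\<bar> | j k. j \<noteq> k}"

definition coh_min :: "real^'n^'m \<Rightarrow> real" where
  "coh_min A = Min {\<bar>(A $ j) \<bullet> (A $ k)\<bar> | j k. j \<noteq> k}"

definition frob_sq :: "real^'n^'m \<Rightarrow> real" where
  "frob_sq A = (\<Sum>i\<in>UNIV. \<Sum>j\<in>UNIV. (A $ i $ j)\<^sup>2)"

definition inv_norm :: "real^'n^'m \<Rightarrow> real" where
  "inv_norm A = Inf {M. \<forall>z. M * norm (A *v z) \<ge> norm z}"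

definition scaled_cond :: "real^'n^'m \<Rightarrow> real" where
  "scaled_cond A = frob_sq A * (inv_norm A)\<^sup>2"

end

theory Submission
  imports Defs
begin

(* Write e = x - x_{k-1}, c_i = <a_i, e> and mu_rs = <a_r, a_s>.  One step with the
   pair (r,s) projects the error orthogonally onto the complement of span{a_s, a_r};
   since v = (a_r - mu a_s)/sqrt(1 - mu^2) completes a_s to an orthonormal pair,
     |x - x_k|^2 = |e|^2 - c_s^2 - (c_r - mu c_s)^2 / (1 - mu^2)          (pair gain).
   Splitting 1/(1 - mu^2) = 1 + mu^2/(1 - mu^2), the gain summed over all ordered
   pairs r ~= s is bounded below by three terms:
     sum c_s^2                         = (m - 1) |Ae|^2,
     sum (c_r - mu c_s)^2             >= t (m |e|^2 - |Ae|^2)   (smallest singular value),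
     sum (c_r - mu c_s)^2 mu^2/(1-mu^2) >= D (m - 1) |Ae|^2       (coherence),
   where t = 1/|A^-1|^2, and D = min (w delta) (w Delta) with w u = u^2(1-u)/(1+u),
   a function that is unimodal on [0,1), so that D <= w |mu_rs| for every pair.
   Finally |Ae|^2 ranges over [t |e|^2, m |e|^2] and the resulting bound is linear in
   |Ae|^2, so checking the two endpoints gives the factor (1 - t/m)^2 - D t/m, where
   R = ||A||_F^2 |A^-1|^2 = m/t for a standardized matrix. *)

section \<open>The error after one step\<close>

definition pair_gain :: "real^'n^'m \<Rightarrow> 'm \<Rightarrow> 'm \<Rightarrow> real^'n \<Rightarrow> real" where
  "pair_gain A r s e =
     (A$s \<bullet> e)\<^sup>2 + (A$r \<bullet> e - (A$r \<bullet> A$s) * (A$s \<bullet> e))\<^sup>2 / (1 - (A$r \<bullet> A$s)\<^sup>2)"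

text \<open>A step for a consistent system is an orthogonal projection of the error onto
  the complement of the orthonormal pair a_s, v; this yields the exact error.\<close>
lemma tsk_step_error:
  fixes A :: "real^'n^'m"
  assumes unit: "norm (A$r) = 1" "norm (A$s) = 1"
    and nonpar: "\<bar>A$r \<bullet> A$s\<bar> < 1" and b: "b = A *v x"
  shows "(norm (x - tsk_step A b r s xp))\<^sup>2 = (norm (x - xp))\<^sup>2 - pair_gain A r s (x - xp)"
proof -
  define a where "a = A$s"
  define ar where "ar = A$r"
  define mu where "mu = ar \<bullet> a"
  define e where "e = x - xp"
  define cs where "cs = a \<bullet> e"
  define cr where "cr = ar \<bullet> e"
  define sq where "sq = sqrt (1 - mu\<^sup>2)"
  define w where "w = ar - mu *\<^sub>R a"
  define v where "v = (1/sq) *\<^sub>R w"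
  define y where "y = xp + (b$s - xp \<bullet> a) *\<^sub>R a"
  define beta where "beta = (b$r - b$s * mu) / sq"
  have step: "tsk_step A b r s xp = y + (beta - y \<bullet> v) *\<^sub>R v"
    by (simp add: tsk_step_def Let_def a_def ar_def mu_def sq_def w_def v_def y_def beta_def)
  have b_comp: "b$s = a \<bullet> x" "b$r = ar \<bullet> x"
    by (simp_all add: b matrix_vector_mul_component a_def ar_def)
  have mu2: "mu\<^sup>2 < 1"
    using nonpar unfolding mu_def a_def ar_def by (metis abs_square_less_1)
  have sq_pos: "sq > 0" and sq2: "sq\<^sup>2 = 1 - mu\<^sup>2"
    using mu2 by (simp_all add: sq_def)
  have aa: "a \<bullet> a = 1" "ar \<bullet> ar = 1"
    using unit by (simp_all add: a_def ar_def norm_eq_1)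
  \<comment> \<open>y is the projection onto the hyperplane of row s, and x_k that of y along v.\<close>
  have x_y: "x - y = e - cs *\<^sub>R a"
    by (simp add: y_def e_def cs_def b_comp algebra_simps inner_diff_right inner_commute)
  have beta_eq: "beta = x \<bullet> v"
    by (simp add: beta_def v_def w_def b_comp inner_diff_right inner_commute mu_def
        algebra_simps divide_simps)
  have x_xk: "x - tsk_step A b r s xp = (x - y) - ((x - y) \<bullet> v) *\<^sub>R v"
    by (simp add: step beta_eq inner_diff_left algebra_simps)
  have ww: "w \<bullet> w = 1 - mu\<^sup>2"
    by (simp add: w_def inner_diff_left inner_diff_right aa mu_def inner_commute
        power2_eq_square algebra_simps)
  have vv: "v \<bullet> v = 1"
    using sq_pos sq2 ww mu2 by (simp add: v_def power2_eq_square)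
  have av: "a \<bullet> v = 0"
    by (simp add: v_def w_def inner_diff_right aa mu_def inner_commute)
  have xy_v: "(x - y) \<bullet> v = (cr - mu * cs) / sq"
    using av by (simp add: x_y inner_diff_left v_def w_def inner_diff_right cr_def cs_def
        inner_commute aa mu_def)
  have xy_xy: "(x - y) \<bullet> (x - y) = e \<bullet> e - cs\<^sup>2"
    by (simp add: x_y inner_diff_left inner_diff_right aa cs_def inner_commute power2_eq_square)
  have "(norm (x - tsk_step A b r s xp))\<^sup>2 = (x - y) \<bullet> (x - y) - ((x - y) \<bullet> v)\<^sup>2"
    unfolding x_xk power2_norm_eq_inner
    by (simp add: inner_diff_left inner_diff_right vv inner_commute power2_eq_square)
  also have "\<dots> = e \<bullet> e - cs\<^sup>2 - (cr - mu * cs)\<^sup>2 / (1 - mu\<^sup>2)"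
    by (simp add: xy_xy xy_v power_divide sq2)
  finally show ?thesis
    by (simp add: pair_gain_def power2_norm_eq_inner e_def cs_def cr_def mu_def a_def ar_def)
qed

lemma pair_gain_split:
  fixes A :: "real^'n^'m"
  assumes "\<bar>A$r \<bullet> A$s\<bar> < 1"
  shows "pair_gain A r s e = (A$s \<bullet> e)\<^sup>2 + (A$r \<bullet> e - (A$r \<bullet> A$s) * (A$s \<bullet> e))\<^sup>2
     + (A$r \<bullet> e - (A$r \<bullet> A$s) * (A$s \<bullet> e))\<^sup>2 * (A$r \<bullet> A$s)\<^sup>2 / (1 - (A$r \<bullet> A$s)\<^sup>2)"
proof -
  have "(A$r \<bullet> A$s)\<^sup>2 < 1"
    using assms by (simp add: abs_square_less_1)
  then have "1 - (A$r \<bullet> A$s)\<^sup>2 \<noteq> 0" by simp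
  then show ?thesis by (simp add: pair_gain_def field_simps)
qed

section \<open>Sums over ordered pairs of distinct indices\<close>

lemma sum_offdiag:
  fixes F :: "'m::finite \<times> 'm \<Rightarrow> real"
  shows "sum F {(r,s). r \<noteq> s} = (\<Sum>r\<in>UNIV. \<Sum>s\<in>UNIV. F (r,s)) - (\<Sum>r\<in>UNIV. F (r,r))"
proof -
  have pairs: "{(r,s). r \<noteq> s} = UNIV - range (\<lambda>r::'m. (r,r))" by auto
  have "sum F {(r,s). r \<noteq> s} = sum F UNIV - sum F (range (\<lambda>r::'m. (r,r)))"
    unfolding pairs by (rule sum_diff) auto
  also have "sum F UNIV = (\<Sum>r\<in>UNIV. \<Sum>s\<in>UNIV. F (r,s))"
    unfolding sum.cartesian_product UNIV_Times_UNIV by (simp add: case_prod_beta')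
  also have "sum F (range (\<lambda>r::'m. (r,r))) = (\<Sum>r\<in>UNIV. F (r,r))"
    by (subst sum.reindex) (auto simp: inj_on_def)
  finally show ?thesis .
qed

lemma sum_offdiag_snd:
  fixes g :: "'m::finite \<Rightarrow> real"
  shows "(\<Sum>(r,s)\<in>{(r,s). r \<noteq> s}. g s) = (real CARD('m) - 1) * (\<Sum>i\<in>UNIV. g i)"
  by (simp add: sum_offdiag algebra_simps)

lemma sum_offdiag_swap:
  fixes F :: "'m::finite \<Rightarrow> 'm \<Rightarrow> real"
  shows "(\<Sum>(r,s)\<in>{(r,s). r \<noteq> s}. F s r) = (\<Sum>(r,s)\<in>{(r,s). r \<noteq> s}. F r s)"
  by (rule sum.reindex_bij_witness[of _ prod.swap prod.swap]) auto

section \<open>Norm bounds for the matrix\<close>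

lemma norm_matrix_vector_sq:
  fixes A :: "real^'n^'m"
  shows "(norm (A *v u))\<^sup>2 = (\<Sum>i\<in>UNIV. (A$i \<bullet> u)\<^sup>2)"
proof -
  have "(norm (A *v u))\<^sup>2 = (\<Sum>i\<in>UNIV. ((A *v u)$i)\<^sup>2)"
    unfolding power2_norm_eq_inner inner_vec_def by (simp add: power2_eq_square)
  then show ?thesis by (simp add: matrix_vector_mul_component)
qed

lemma standardized_norm_bound:
  fixes A :: "real^'n^'m"
  assumes "standardized A"
  shows "(norm (A *v u))\<^sup>2 \<le> real CARD('m) * (norm u)\<^sup>2"
proof -
  have "(A$i \<bullet> u)\<^sup>2 \<le> (norm u)\<^sup>2" for i
  proof -
    have "\<bar>A$i \<bullet> u\<bar> \<le> norm u"
      using Cauchy_Schwarz_ineq2[of "A$i" u] assms by (simp add: standardized_def)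
    then show ?thesis using power_mono[of "\<bar>A$i \<bullet> u\<bar>" "norm u" 2] by simp
  qed
  then show ?thesis
    unfolding norm_matrix_vector_sq using sum_bounded_above[of UNIV "\<lambda>i. (A$i \<bullet> u)\<^sup>2" "(norm u)\<^sup>2"] by simp
qed

lemma frob_sq_standardized:
  fixes A :: "real^'n^'m"
  assumes "standardized A"
  shows "frob_sq A = real CARD('m)"
proof -
  have "(\<Sum>j\<in>UNIV. (A $ i $ j)\<^sup>2) = 1" for i
    using assms by (simp add: standardized_def norm_eq_1 inner_vec_def power2_eq_square)
  then show ?thesis by (simp add: frob_sq_def)
qed

text \<open>For an injective matrix, inv_norm is a positive constant realising the lower bound
  |z| <= inv_norm A * |Az|, i.e. it is the reciprocal of the smallest singular value.\<close>
lemma inv_norm_bound: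
  fixes A :: "real^'n^'m"
  assumes inj: "inj ((*v) A)"
  shows "inv_norm A > 0" "norm z \<le> inv_norm A * norm (A *v z)"
proof -
  obtain B where B: "B > 0" "\<And>z. B * norm z \<le> norm (A *v z)"
    using linear_inj_bounded_below_pos[OF matrix_vector_mul_linear inj] by blast
  define S where "S = {M. \<forall>z. M * norm (A *v z) \<ge> norm z}"
  have inS: "1/B \<in> S" unfolding S_def
  proof (intro CollectI allI)
    fix z show "norm z \<le> 1/B * norm (A *v z)" using B by (simp add: field_simps mult.commute)
  qed
  then have ne: "S \<noteq> {}" by blast
  define z0 :: "real^'n" where "z0 = axis undefined 1"
  have z0: "norm z0 = 1" by (simp add: z0_def)
  have S_ge: "M \<ge> 1 / norm (A *v z0)" "A *v z0 \<noteq> 0" if "M \<in> S" for M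
  proof -
    have h: "M * norm (A *v z0) \<ge> 1" using that z0 unfolding S_def by (metis mem_Collect_eq)
    then show "A *v z0 \<noteq> 0" by auto
    then show "M \<ge> 1 / norm (A *v z0)" using h by (simp add: field_simps)
  qed
  have "inv_norm A \<ge> 1 / norm (A *v z0)"
    unfolding inv_norm_def S_def[symmetric] by (rule cInf_greatest[OF ne]) (use S_ge in auto)
  moreover have "0 < 1 / norm (A *v z0)" using S_ge(2)[OF inS] by simp
  ultimately show "inv_norm A > 0" by linarith
  show "norm z \<le> inv_norm A * norm (A *v z)"
  proof (cases "A *v z = 0")
    case True
    then have "z = 0" using inj by (metis injD matrix_vector_mult_0_right)
    then show ?thesis by simp
  next
    case False
    have "norm z / norm (A *v z) \<le> inv_norm A"
      unfolding inv_norm_def S_def[symmetric]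
    proof (rule cInf_greatest[OF ne])
      fix M assume "M \<in> S"
      then have "M * norm (A *v z) \<ge> norm z" unfolding S_def by blast
      then show "norm z / norm (A *v z) \<le> M" using False by (simp add: field_simps)
    qed
    then show ?thesis using False by (simp add: field_simps)
  qed
qed

lemma smallest_sv_bound:
  fixes A :: "real^'n^'m"
  assumes "inj ((*v) A)"
  shows "1 / (inv_norm A)\<^sup>2 * (norm u)\<^sup>2 \<le> (norm (A *v u))\<^sup>2"
proof -
  have pos: "inv_norm A > 0" using inv_norm_bound(1)[OF assms] .
  have "(norm u)\<^sup>2 \<le> (inv_norm A * norm (A *v u))\<^sup>2"
    using inv_norm_bound(2)[OF assms, of u] by (simp add: power_mono)
  then show ?thesis using pos by (simp add: field_simps power_mult_distrib)
qed

section \<open>The coherence weight\<close>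

definition coh_weight :: "real \<Rightarrow> real" where
  "coh_weight u = u\<^sup>2 * (1 - u) / (1 + u)"

lemma coh_weight_diff:
  fixes t a :: real
  assumes "0 \<le> a" "0 \<le> t"
  shows "coh_weight t - coh_weight a
     = (t - a) * (t * (1 - t - a*t) + a * (1 - a - a*t)) / ((1+t) * (1+a))"
proof -
  have num: "t\<^sup>2*(1-t)*(1+a) - a\<^sup>2*(1-a)*(1+t) = (t - a) * (t*(1 - t - a*t) + a*(1 - a - a*t))"
    by (simp add: power2_eq_square algebra_simps)
  have "coh_weight t - coh_weight a = (t\<^sup>2*(1-t)*(1+a) - a\<^sup>2*(1-a)*(1+t)) / ((1+t)*(1+a))"
    using assms by (simp add: coh_weight_def diff_frac_eq)
  then show ?thesis using num by simp
qed

text \<open>coh_weight increases while t + t^2 <= 1 and decreases afterwards, so on an interval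
  [a,b] within [0,1) it is minimal at an endpoint.\<close>
lemma coh_weight_unimodal:
  fixes a t b :: real
  assumes "0 \<le> a" "a \<le> t" "t \<le> b" "b < 1"
  shows "min (coh_weight a) (coh_weight b) \<le> coh_weight t"
proof (cases "t + t\<^sup>2 \<le> 1")
  case True
  have "a*t \<le> t*t" "a*a \<le> t*t" using assms by (simp_all add: mult_right_mono mult_mono)
  then have "0 \<le> t*(1 - t - a*t) + a*(1 - a - a*t)"
    using assms True by (intro add_nonneg_nonneg mult_nonneg_nonneg) (auto simp: power2_eq_square)
  then have "0 \<le> (t - a) * (t*(1 - t - a*t) + a*(1 - a - a*t)) / ((1+t)*(1+a))"
    using assms by simp
  then have "coh_weight a \<le> coh_weight t"
    using coh_weight_diff[of a t] assms by simp
  then show ?thesis by simp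
next
  case False
  have "t*t \<le> b*t" "t*t \<le> b*b" using assms by (simp_all add: mult_right_mono mult_mono)
  then have "1 - b - t*b \<le> 0" "1 - t - t*b \<le> 0"
    using assms False by (auto simp: power2_eq_square algebra_simps)
  then have "b*(1 - b - t*b) + t*(1 - t - t*b) \<le> 0"
    using assms by (smt (verit) mult_nonneg_nonpos)
  then have "(b - t) * (b*(1 - b - t*b) + t*(1 - t - t*b)) / ((1+b)*(1+t)) \<le> 0"
    using assms by (intro divide_nonpos_pos mult_nonneg_nonpos) auto
  then have "coh_weight b \<le> coh_weight t"
    using coh_weight_diff[of t b] assms by simp
  then show ?thesis by simp
qed

lemma coh_weight_nonneg:
  assumes "0 \<le> u" "u \<le> 1"
  shows "0 \<le> coh_weight u"
  using assms by (simp add: coh_weight_def)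

lemma coherence_range:
  fixes A :: "real^'n^'m"
  assumes "no_parallel_rows A" "r \<noteq> s"
  shows "0 \<le> coh_min A" "coh_min A \<le> \<bar>A$r \<bullet> A$s\<bar>"
    "\<bar>A$r \<bullet> A$s\<bar> \<le> coh_max A" "coh_max A < 1"
proof -
  define C where "C = {\<bar>(A $ j) \<bullet> (A $ k)\<bar> | j k. j \<noteq> k}"
  have "C \<subseteq> (\<lambda>(j,k). \<bar>(A $ j) \<bullet> (A $ k)\<bar>) ` UNIV" unfolding C_def by auto
  then have fin: "finite C" using finite_subset by (metis finite finite_imageI)
  have in_C: "\<bar>A$r \<bullet> A$s\<bar> \<in> C" using assms(2) unfolding C_def by blast
  have C_range: "0 \<le> z \<and> z < 1" if "z \<in> C" for z
    using that assms(1) unfolding C_def no_parallel_rows_def by auto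
  show "0 \<le> coh_min A"
    using C_range Min_in[OF fin] in_C by (auto simp: coh_min_def C_def[symmetric])
  show "coh_min A \<le> \<bar>A$r \<bullet> A$s\<bar>"
    using Min_le[OF fin in_C] by (simp add: coh_min_def C_def[symmetric])
  show "\<bar>A$r \<bullet> A$s\<bar> \<le> coh_max A"
    using Max_ge[OF fin in_C] by (simp add: coh_max_def C_def[symmetric])
  show "coh_max A < 1"
    using C_range Max_in[OF fin] in_C by (auto simp: coh_max_def C_def[symmetric])
qed

lemma coherence_weight_bounds:
  fixes A :: "real^'n^'m"
  assumes "no_parallel_rows A" "r \<noteq> s"
  shows "0 \<le> min (coh_weight (coh_min A)) (coh_weight (coh_max A))"
    "min (coh_weight (coh_min A)) (coh_weight (coh_max A)) \<le> coh_weight \<bar>A$r \<bullet> A$s\<bar>"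
proof -
  note range = coherence_range[OF assms]
  show "0 \<le> min (coh_weight (coh_min A)) (coh_weight (coh_max A))"
    using range by (intro min.boundedI coh_weight_nonneg) linarith+
  show "min (coh_weight (coh_min A)) (coh_weight (coh_max A)) \<le> coh_weight \<bar>A$r \<bullet> A$s\<bar>"
    using range by (intro coh_weight_unimodal)
qed

text \<open>Pairing (r,s) with (s,r): the coherence remainders of both orders dominate
  D (c_r^2 + c_s^2), since (x - mu y)^2 + (y - mu x)^2 >= (1 - |mu|)^2 (x^2 + y^2).\<close>
lemma pair_bound:
  fixes x y mu D :: real
  assumes "\<bar>mu\<bar> < 1" "D \<le> coh_weight \<bar>mu\<bar>"
  shows "D * (x\<^sup>2 + y\<^sup>2) \<le> (x - mu*y)\<^sup>2 * mu\<^sup>2 / (1 - mu\<^sup>2) + (y - mu*x)\<^sup>2 * mu\<^sup>2 / (1 - mu\<^sup>2)"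
proof -
  define u where "u = \<bar>mu\<bar>"
  have u: "0 \<le> u" "u < 1" "mu\<^sup>2 = u\<^sup>2" using assms by (auto simp: u_def)
  have cross: "4*mu*x*y \<le> 2*u*(x\<^sup>2+y\<^sup>2)"
  proof -
    have "4*mu*x*y \<le> 4*u*\<bar>x\<bar>*\<bar>y\<bar>" unfolding u_def by (simp add: abs_mult[symmetric])
    also have "\<dots> \<le> 2*u*(x\<^sup>2+y\<^sup>2)"
      using mult_left_mono[OF sum_squares_bound[of "\<bar>x\<bar>" "\<bar>y\<bar>"] u(1)]
      by (simp add: algebra_simps)
    finally show ?thesis .
  qed
  have sq: "(1-u)\<^sup>2*(x\<^sup>2+y\<^sup>2) \<le> (x - mu*y)\<^sup>2 + (y - mu*x)\<^sup>2"
  proof -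
    have expand: "(x - mu*y)\<^sup>2 + (y - mu*x)\<^sup>2 = (1+mu\<^sup>2)*(x\<^sup>2+y\<^sup>2) - 4*mu*x*y"
      "(1-u)\<^sup>2*(x\<^sup>2+y\<^sup>2) = (1+u\<^sup>2)*(x\<^sup>2+y\<^sup>2) - 2*u*(x\<^sup>2+y\<^sup>2)"
      by (simp_all add: power2_eq_square algebra_simps)
    show ?thesis unfolding expand u(3) using cross by linarith
  qed
  have "u\<^sup>2 < 1" using u by (simp add: abs_square_less_1)
  then have pos: "0 < 1 - mu\<^sup>2" using u by simp
  have "D * (x\<^sup>2 + y\<^sup>2) \<le> coh_weight u * (x\<^sup>2+y\<^sup>2)"
    using assms(2) by (intro mult_right_mono) (auto simp: u_def)
  also have "coh_weight u = (1-u)\<^sup>2 * (u\<^sup>2 / (1 - u\<^sup>2))"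
  proof -
    have "1 - u\<^sup>2 = (1-u)*(1+u)" by (simp add: power2_eq_square algebra_simps)
    moreover have "1 - u \<noteq> 0" "1 + u \<noteq> 0" using u by auto
    ultimately show ?thesis by (simp add: coh_weight_def power2_eq_square)
  qed
  also have "(1-u)\<^sup>2 * (u\<^sup>2 / (1 - u\<^sup>2)) * (x\<^sup>2+y\<^sup>2)
      \<le> ((x - mu*y)\<^sup>2 + (y - mu*x)\<^sup>2) * (u\<^sup>2 / (1 - u\<^sup>2))"
    using mult_right_mono[OF sq, of "u\<^sup>2/(1-u\<^sup>2)"] pos u(3) by (simp add: mult_ac)
  also have "\<dots> = (x - mu*y)\<^sup>2 * mu\<^sup>2 / (1 - mu\<^sup>2) + (y - mu*x)\<^sup>2 * mu\<^sup>2 / (1 - mu\<^sup>2)"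
    using u by (simp add: add_divide_distrib algebra_simps)
  finally show ?thesis .
qed

section \<open>Summing the gains over all pairs\<close>

text \<open>Summing over r first, the projection terms are |A(e - c_s a_s)|^2, which the smallest
  singular value bounds by t |e - c_s a_s|^2 = t (|e|^2 - c_s^2).\<close>
lemma sum_projection_gain:
  fixes A :: "real^'n^'m" and e :: "real^'n"
  assumes std: "standardized A" and low: "\<And>u. t * (norm u)\<^sup>2 \<le> (norm (A *v u))\<^sup>2"
  shows "t * (real CARD('m) * (norm e)\<^sup>2 - (norm (A *v e))\<^sup>2)
     \<le> (\<Sum>(r,s)\<in>{(r,s). r \<noteq> s}. (A$r \<bullet> e - (A$r \<bullet> A$s) * (A$s \<bullet> e))\<^sup>2)"
proof -
  have unit: "A$i \<bullet> A$i = 1" for i using std by (simp add: standardized_def norm_eq_1)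
  have residual: "(norm (e - (A$s \<bullet> e) *\<^sub>R A$s))\<^sup>2 = (norm e)\<^sup>2 - (A$s \<bullet> e)\<^sup>2" for s
    using unit[of s] unfolding power2_norm_eq_inner
    by (simp add: inner_diff_left inner_diff_right inner_commute power2_eq_square)
  have "t * (real CARD('m) * (norm e)\<^sup>2 - (norm (A *v e))\<^sup>2)
      = (\<Sum>s\<in>UNIV. t * (norm (e - (A$s \<bullet> e) *\<^sub>R A$s))\<^sup>2)"
    by (simp add: residual norm_matrix_vector_sq sum_subtractf sum_distrib_left[symmetric])
  also have "\<dots> \<le> (\<Sum>s\<in>UNIV. (norm (A *v (e - (A$s \<bullet> e) *\<^sub>R A$s)))\<^sup>2)"
    by (rule sum_mono) (rule low)
  also have "\<dots> = (\<Sum>s\<in>UNIV. \<Sum>r\<in>UNIV. (A$r \<bullet> e - (A$r \<bullet> A$s) * (A$s \<bullet> e))\<^sup>2)"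
    by (simp add: norm_matrix_vector_sq inner_diff_right mult.commute)
  also have "\<dots> = (\<Sum>r\<in>UNIV. \<Sum>s\<in>UNIV. (A$r \<bullet> e - (A$r \<bullet> A$s) * (A$s \<bullet> e))\<^sup>2)"
    by (rule sum.swap)
  also have "\<dots> = (\<Sum>(r,s)\<in>{(r,s). r \<noteq> s}. (A$r \<bullet> e - (A$r \<bullet> A$s) * (A$s \<bullet> e))\<^sup>2)"
    by (simp add: sum_offdiag unit)
  finally show ?thesis .
qed

text \<open>Symmetrizing over (r,s) and (s,r) and applying pair_bound to each unordered pair.\<close>
lemma sum_coherence_gain:
  fixes A :: "real^'n^'m" and e :: "real^'n"
  assumes nonpar: "no_parallel_rows A"
    and D: "\<And>r s. r \<noteq> s \<Longrightarrow> D \<le> coh_weight \<bar>A$r \<bullet> A$s\<bar>"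
  shows "D * (real CARD('m) - 1) * (norm (A *v e))\<^sup>2
     \<le> (\<Sum>(r,s)\<in>{(r,s). r \<noteq> s}.
          (A$r \<bullet> e - (A$r \<bullet> A$s) * (A$s \<bullet> e))\<^sup>2 * (A$r \<bullet> A$s)\<^sup>2 / (1 - (A$r \<bullet> A$s)\<^sup>2))"
    (is "_ \<le> (\<Sum>(r,s)\<in>?P. ?q r s)")
proof -
  have snd_sum: "(\<Sum>(r,s)\<in>?P. (A$s \<bullet> e)\<^sup>2) = (real CARD('m) - 1) * (norm (A *v e))\<^sup>2"
    by (simp add: sum_offdiag_snd norm_matrix_vector_sq)
  moreover have fst_sum: "(\<Sum>(r,s)\<in>?P. (A$r \<bullet> e)\<^sup>2) = (real CARD('m) - 1) * (norm (A *v e))\<^sup>2"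
    using sum_offdiag_swap[of "\<lambda>r s. (A$s \<bullet> e)\<^sup>2"] snd_sum by simp
  moreover have "(\<Sum>(r,s)\<in>?P. D * ((A$r \<bullet> e)\<^sup>2 + (A$s \<bullet> e)\<^sup>2))
      = D * ((\<Sum>(r,s)\<in>?P. (A$r \<bullet> e)\<^sup>2) + (\<Sum>(r,s)\<in>?P. (A$s \<bullet> e)\<^sup>2))"
    by (simp add: sum.distrib[symmetric] sum_distrib_left case_prod_unfold)
  ultimately have "2 * (D * (real CARD('m) - 1) * (norm (A *v e))\<^sup>2)
      = (\<Sum>(r,s)\<in>?P. D * ((A$r \<bullet> e)\<^sup>2 + (A$s \<bullet> e)\<^sup>2))"
    by simp
  also have "\<dots> \<le> (\<Sum>(r,s)\<in>?P. ?q r s + ?q s r)"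
  proof (rule sum_mono)
    fix p assume "p \<in> ?P"
    then obtain r s where p: "p = (r,s)" and rs: "r \<noteq> s" by auto
    have "\<bar>A$r \<bullet> A$s\<bar> < 1" using nonpar rs by (simp add: no_parallel_rows_def)
    from pair_bound[OF this D[OF rs], of "A$r \<bullet> e" "A$s \<bullet> e"]
    show "(case p of (r,s) \<Rightarrow> D * ((A$r \<bullet> e)\<^sup>2 + (A$s \<bullet> e)\<^sup>2))
        \<le> (case p of (r,s) \<Rightarrow> ?q r s + ?q s r)"
      by (simp add: p inner_commute[of "A$s" "A$r"])
  qed
  also have "\<dots> = 2 * (\<Sum>(r,s)\<in>?P. ?q r s)"
    using sum_offdiag_swap[of ?q] by (simp add: sum.distrib case_prod_unfold)
  finally show ?thesis by simp
qed

lemma sum_pair_gain: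
  fixes A :: "real^'n^'m" and e :: "real^'n"
  assumes std: "standardized A" and nonpar: "no_parallel_rows A"
    and low: "\<And>u. t * (norm u)\<^sup>2 \<le> (norm (A *v u))\<^sup>2"
    and D: "\<And>r s. r \<noteq> s \<Longrightarrow> D \<le> coh_weight \<bar>A$r \<bullet> A$s\<bar>"
  shows "(real CARD('m) - 1) * (norm (A *v e))\<^sup>2
       + t * (real CARD('m) * (norm e)\<^sup>2 - (norm (A *v e))\<^sup>2)
       + D * (real CARD('m) - 1) * (norm (A *v e))\<^sup>2
     \<le> (\<Sum>(r,s)\<in>{(r,s). r \<noteq> s}. pair_gain A r s e)"
proof -
  let ?P = "{(r,s). r \<noteq> s}"
  let ?proj = "\<lambda>r s. (A$r \<bullet> e - (A$r \<bullet> A$s) * (A$s \<bullet> e))\<^sup>2"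
  let ?coh = "\<lambda>r s. ?proj r s * (A$r \<bullet> A$s)\<^sup>2 / (1 - (A$r \<bullet> A$s)\<^sup>2)"
  have "(\<Sum>(r,s)\<in>?P. pair_gain A r s e) = (\<Sum>(r,s)\<in>?P. (A$s \<bullet> e)\<^sup>2 + ?proj r s + ?coh r s)"
    using nonpar by (intro sum.cong) (auto simp: no_parallel_rows_def pair_gain_split)
  also have "\<dots> = (\<Sum>(r,s)\<in>?P. (A$s \<bullet> e)\<^sup>2) + (\<Sum>(r,s)\<in>?P. ?proj r s) + (\<Sum>(r,s)\<in>?P. ?coh r s)"
    by (simp add: sum.distrib case_prod_unfold)
  finally have gain_split: "(\<Sum>(r,s)\<in>?P. pair_gain A r s e)
      = (\<Sum>(r,s)\<in>?P. (A$s \<bullet> e)\<^sup>2) + (\<Sum>(r,s)\<in>?P. ?proj r s) + (\<Sum>(r,s)\<in>?P. ?coh r s)" .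
  have "(\<Sum>(r,s)\<in>?P. (A$s \<bullet> e)\<^sup>2) = (real CARD('m) - 1) * (norm (A *v e))\<^sup>2"
    by (simp add: sum_offdiag_snd norm_matrix_vector_sq)
  then show ?thesis
    using gain_split sum_projection_gain[OF std low, of e] sum_coherence_gain[OF nonpar D, of e]
    by linarith
qed

lemma tsk_expect_error:
  fixes A :: "real^'n^'m"
  assumes std: "standardized A" and nonpar: "no_parallel_rows A" and b: "b = A *v x"
    and two: "CARD('m) \<ge> 2"
  shows "tsk_expect A b xp (\<lambda>xk. (norm (x - xk))\<^sup>2)
     = (norm (x - xp))\<^sup>2 - (\<Sum>(r,s)\<in>{(r,s). r \<noteq> s}. pair_gain A r s (x - xp))
         / ((real CARD('m))\<^sup>2 - real CARD('m))"
proof -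
  define N where "N = (real CARD('m))\<^sup>2 - real CARD('m)"
  have N: "N \<noteq> 0" using two by (simp add: N_def power2_eq_square)
  have step: "(norm (x - tsk_step A b r s xp))\<^sup>2 = (norm (x - xp))\<^sup>2 - pair_gain A r s (x - xp)"
    if "r \<noteq> s" for r s
    using tsk_step_error[of A r s b x xp] std nonpar b that
    by (simp add: standardized_def no_parallel_rows_def)
  have count: "(\<Sum>p\<in>{(r::'m,s). r \<noteq> s}. c) = N * c" for c :: real
    by (subst sum_offdiag) (simp add: N_def power2_eq_square algebra_simps)
  have "(\<Sum>p\<in>{(r,s). r \<noteq> s}. (norm (x - tsk_step A b (fst p) (snd p) xp))\<^sup>2)
      = N * (norm (x - xp))\<^sup>2 - (\<Sum>(r,s)\<in>{(r,s). r \<noteq> s}. pair_gain A r s (x - xp))"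
  proof -
    have "(\<Sum>p\<in>{(r,s). r \<noteq> s}. (norm (x - tsk_step A b (fst p) (snd p) xp))\<^sup>2)
        = (\<Sum>(r,s)\<in>{(r,s). r \<noteq> s}. (norm (x - xp))\<^sup>2 - pair_gain A r s (x - xp))"
      by (rule sum.cong) (auto simp: step)
    also have "\<dots> = (\<Sum>p\<in>{(r::'m,s). r \<noteq> s}. (norm (x - xp))\<^sup>2)
        - (\<Sum>(r,s)\<in>{(r,s). r \<noteq> s}. pair_gain A r s (x - xp))"
      unfolding case_prod_unfold by (rule sum_subtractf)
    finally show ?thesis unfolding count .
  qed
  then show ?thesis using N by (simp add: tsk_expect_def N_def[symmetric] diff_divide_distrib)
qed

section \<open>The contraction factor\<close>

text \<open>With S = |Ae|^2 in [t E0, m E0], the lower bound for the gain is linear in S and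
  the claimed inequality holds at both endpoints; hence it holds throughout.\<close>
lemma contraction_arith:
  fixes m t E0 S G D :: real
  assumes m2: "2 \<le> m" and t: "0 < t" "t \<le> m" and E0: "0 \<le> E0"
    and S: "t*E0 \<le> S" "S \<le> m*E0" and D: "0 \<le> D"
    and G: "(m-1)*S + t*(m*E0 - S) + D*(m-1)*S \<le> G"
  shows "E0 - G / (m\<^sup>2 - m) \<le> ((1 - t/m)\<^sup>2 - D*(t/m)) * E0"
proof -
  define \<Phi> where "\<Phi> X = (m-1)*X + t*(m*E0 - X) + D*(m-1)*X - (m-1)*(2*t - t\<^sup>2/m + D*t)*E0"
    for X
  define \<kappa> where "\<kappa> = (m-1)*(1+D) - t"
  have lin: "\<Phi> X = \<Phi> Y + \<kappa>*(X - Y)" for X Y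
    by (simp add: \<Phi>_def \<kappa>_def algebra_simps)
  have m_pos: "m > 0" using m2 by simp
  have "\<Phi> (t*E0) = E0 * t * (m - t) / m"
    using m_pos by (simp add: \<Phi>_def field_simps power2_eq_square)
  then have low_end: "\<Phi> (t*E0) \<ge> 0" using E0 t m_pos by simp
  have "\<Phi> (m*E0) = E0 * (m-1) * ((m-t)\<^sup>2/m + D*(m-t))"
    using m_pos by (simp add: \<Phi>_def field_simps power2_eq_square)
  then have high_end: "\<Phi> (m*E0) \<ge> 0" using E0 t m_pos m2 D by simp
  have Phi_nonneg: "\<Phi> S \<ge> 0"
  proof (cases "\<kappa> \<ge> 0")
    case True
    then have "\<kappa>*(S - t*E0) \<ge> 0" using S by simp
    then show ?thesis using lin[of S "t*E0"] low_end by linarith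
  next
    case False
    then have "\<kappa>*(S - m*E0) \<ge> 0" using S by (simp add: mult_nonpos_nonpos)
    then show ?thesis using lin[of S "m*E0"] high_end by linarith
  qed
  have factor: "(m\<^sup>2-m)*((1 - t/m)\<^sup>2 - D*(t/m)) = (m\<^sup>2 - m) - (m-1)*(2*t - t\<^sup>2/m + D*t)"
    using m_pos by (simp add: field_simps power2_eq_square)
  have "(m\<^sup>2 - m)*E0 - ((m-1)*S + t*(m*E0 - S) + D*(m-1)*S)
      = (m\<^sup>2-m)*((1 - t/m)\<^sup>2 - D*(t/m)) * E0 - \<Phi> S"
    unfolding factor by (simp add: \<Phi>_def algebra_simps)
  then have gain: "(m\<^sup>2 - m)*E0 - G \<le> (m\<^sup>2-m)*((1 - t/m)\<^sup>2 - D*(t/m)) * E0"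
    using G Phi_nonneg by linarith
  have N: "m\<^sup>2 - m > 0" using m2 by (simp add: power2_eq_square)
  then have "E0 - G / (m\<^sup>2 - m) = ((m\<^sup>2 - m)*E0 - G) / (m\<^sup>2 - m)"
    by (simp add: diff_divide_distrib)
  also have "\<dots> \<le> ((1 - t/m)\<^sup>2 - D*(t/m)) * E0"
    using gain N by (simp add: pos_divide_le_eq mult_ac)
  finally show ?thesis .
qed

theorem lemma3:
  fixes A :: "real^'n^'m" and x xp :: "real^'n" and b :: "real^'m"
  assumes "CARD('m) > CARD('n)"
    and "rank A = CARD('n)"
    and "standardized A"
    and "no_parallel_rows A"
    and "b = A *v x"
  shows "tsk_expect A b xp (\<lambda>xk. (norm (x - xk))\<^sup>2)
    \<le> ((1 - 1 / scaled_cond A)\<^sup>2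
        - min ((coh_min A)\<^sup>2 * (1 - coh_min A) / (1 + coh_min A))
              ((coh_max A)\<^sup>2 * (1 - coh_max A) / (1 + coh_max A)) / scaled_cond A)
       * (norm (x - xp))\<^sup>2"
proof -
  define m where "m = real CARD('m)"
  define t where "t = 1 / (inv_norm A)\<^sup>2"
  define D where "D = min (coh_weight (coh_min A)) (coh_weight (coh_max A))"
  define e where "e = x - xp"
  have "0 < CARD('n)" by simp
  then have two: "CARD('m) \<ge> 2" using assms(1) by linarith
  then have "\<not> CARD('m) \<le> Suc 0" by simp
  then obtain r0 s0 :: 'm where "r0 \<noteq> s0"
    using card_le_Suc0_iff_eq[of "UNIV :: 'm set"] by auto
  have inj: "inj ((*v) A)" using assms(2) full_rank_injective by blast
  have low: "t * (norm u)\<^sup>2 \<le> (norm (A *v u))\<^sup>2" for u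
    unfolding t_def by (rule smallest_sv_bound[OF inj])
  have t_pos: "t > 0" using inv_norm_bound(1)[OF inj] by (simp add: t_def)
  have "scaled_cond A = m / t"
    by (simp add: scaled_cond_def frob_sq_standardized[OF assms(3)] t_def m_def)
  then have factor: "(1 - 1 / scaled_cond A)\<^sup>2 - D / scaled_cond A = (1 - t/m)\<^sup>2 - D*(t/m)"
    by simp
  have high: "(norm (A *v u))\<^sup>2 \<le> m * (norm u)\<^sup>2" for u
    unfolding m_def by (rule standardized_norm_bound[OF assms(3)])
  have "t \<le> m"
    using low[of "axis (undefined :: 'n) 1"] high[of "axis (undefined :: 'n) 1"] by simp
  have "0 \<le> D" and D_le: "\<And>r s. r \<noteq> s \<Longrightarrow> D \<le> coh_weight \<bar>A$r \<bullet> A$s\<bar>"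
    using coherence_weight_bounds[OF assms(4)] \<open>r0 \<noteq> s0\<close> unfolding D_def by blast+
  have "tsk_expect A b xp (\<lambda>xk. (norm (x - xk))\<^sup>2)
      = (norm e)\<^sup>2 - (\<Sum>(r,s)\<in>{(r,s). r \<noteq> s}. pair_gain A r s e) / (m\<^sup>2 - m)"
    using tsk_expect_error[OF assms(3,4,5) two] by (simp add: e_def m_def)
  also have "\<dots> \<le> ((1 - t/m)\<^sup>2 - D*(t/m)) * (norm e)\<^sup>2"
    using sum_pair_gain[OF assms(3,4) low D_le, of e] two low[of e] high[of e]
      \<open>t \<le> m\<close> t_pos \<open>0 \<le> D\<close>
    by (intro contraction_arith) (simp_all add: m_def)
  finally show ?thesis
    unfolding e_def by (fold coh_weight_def D_def) (simp only: factor)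
qed

end
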